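(* Let $\beta\ge0$ and $\rho\in(0,1]$. For every $N_1,N_2\in\mathbb N$ and every $\omega$, \[ \log\tilde{\mathcal Z}_{N_1+N_2,\omega}(\rho)\ \ge\ \log\tilde{\mathcal Z}_{N_1,\omega}(\rho)+\log\tilde{\mathcal Z}_{N_2,\theta^{N_1}\omega}(\rho), \] where $(\theta\omega)_n=\omega_{n+1}$ (with the convention $\log0=-\infty$).
   Context: Let $\tau=(\tau_j)_{j\ge0}$ be a renewal process with $\tau_0=0$ and i.i.d. increments with values in $\mathbb N$, law $\mathbf P$, expectation $\mathbf E$; $K(n)=\mathbf P(\tau_1=n)>0$ for all $n$, $K(n)\sim C_Kn^{-(1+\alpha)}$, $\alpha>0$, $C_K>0$. $\delta_n=\mathbf 1_{n\in\{\tau_0,\tau_1,\dots\}}$. Let $\omega=(\omega_n)_{n\ge1}$ be a real sequence (in the paper, i.i.d. with law $\mathbb P$, independent of $\tau$). For $N\in\mathbb N$, $m\in\{0,\dots,N\}$ let $\mathcal Z_{N,m,\omega,\beta}=\mathbf E[\exp(\beta\sum_{j=1}^N\omega_j\delta_j)\mathbf 1_{\tau_m=N}]$ (which is $0$ if $m=0$), and for $\rho\in(0,1]$ let $\tilde{\mathcal Z}_{N,\omega}(\rho):=\min_{m\in\{\lfloor\rho N\rfloor,\lceil\rho N\rceil\}}\mathcal Z_{N,m,\omega,\beta}$. *)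

theory Defs
  imports "HOL-Analysis.Analysis" "HOL-Library.Landau_Symbols"
begin

text \<open>Renewal process: increments i.i.d. with law K on the positive integers.
  The event tau_m = N depends only on the first m increments l_1,...,l_m
  (tau_i = l_1 + ... + l_i), and on this event the renewal points in {1..N}
  are exactly tau_1,...,tau_m. Hence the expectation defining the constrained
  partition function is the finite sum below over increment vectors
  (lists of length m, entries >= 1, summing to N), weighted by the
  product of K (the law of the first m increments).\<close>

definition renewal_kernel :: "(nat \<Rightarrow> real) \<Rightarrow> real \<Rightarrow> real \<Rightarrow> bool" where
  "renewal_kernel K \<alpha> C\<^sub>K \<longleftrightarrow>
     K 0 = 0 \<and> (\<forall>n\<ge>1. K n > 0) \<and> (K sums 1) \<and> \<alpha> > 0 \<and> C\<^sub>K > 0 \<and>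
     (\<lambda>n. K n) \<sim>[at_top] (\<lambda>n. C\<^sub>K * real n powr (-(1 + \<alpha>)))"

definition incr_vectors :: "nat \<Rightarrow> nat \<Rightarrow> nat list set" where
  "incr_vectors N m = {ls. length ls = m \<and> (\<forall>l\<in>set ls. 1 \<le> l) \<and> sum_list ls = N}"

text \<open>Z_{N,m,omega,beta} = E[exp(beta * sum_{j=1}^N omega_j delta_j) 1_{tau_m = N}].\<close>
definition Zc :: "(nat \<Rightarrow> real) \<Rightarrow> real \<Rightarrow> (nat \<Rightarrow> real) \<Rightarrow> nat \<Rightarrow> nat \<Rightarrow> real" where
  "Zc K \<beta> \<omega> N m =
     (\<Sum>ls\<in>incr_vectors N m.
        (\<Prod>i<m. K (ls ! i)) * exp (\<beta> * (\<Sum>i=1..m. \<omega> (sum_list (take i ls)))))"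

definition Ztilde :: "(nat \<Rightarrow> real) \<Rightarrow> real \<Rightarrow> (nat \<Rightarrow> real) \<Rightarrow> real \<Rightarrow> nat \<Rightarrow> real" where
  "Ztilde K \<beta> \<omega> \<rho> N =
     min (Zc K \<beta> \<omega> N (nat \<lfloor>\<rho> * real N\<rfloor>)) (Zc K \<beta> \<omega> N (nat \<lceil>\<rho> * real N\<rceil>))"

definition shift :: "nat \<Rightarrow> (nat \<Rightarrow> real) \<Rightarrow> nat \<Rightarrow> real" where
  "shift k \<omega> = (\<lambda>n. \<omega> (n + k))"

definition elog :: "real \<Rightarrow> ereal" where
  "elog x = (if x = 0 then -\<infinity> else ereal (ln x))"

end

theory Submission
  imports Defs
begin

text \<open>Concatenating an increment vector of length \<open>m\<^sub>1\<close> and sum \<open>N\<^sub>1\<close> with one of length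
  \<open>m\<^sub>2\<close> and sum \<open>N\<^sub>2\<close> gives one of length \<open>m\<^sub>1 + m\<^sub>2\<close> and sum \<open>N\<^sub>1 + N\<^sub>2\<close>, and the weight of
  the concatenation factorises, the second factor seeing the environment shifted by \<open>N\<^sub>1\<close>.
  As all weights are nonnegative, this makes \<open>Zc\<close> supermultiplicative. The number of
  renewals \<open>\<lfloor>\<rho>(N\<^sub>1+N\<^sub>2)\<rfloor>\<close> or \<open>\<lceil>\<rho>(N\<^sub>1+N\<^sub>2)\<rceil>\<close> always splits as a sum of a rounding of \<open>\<rho>N\<^sub>1\<close> and
  one of \<open>\<rho>N\<^sub>2\<close>, so the minimum over roundings inherits supermultiplicativity; taking
  logarithms gives the claim.\<close>

lemma finite_incr_vectors: "finite (incr_vectors N m)"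
proof (rule finite_subset)
  show "incr_vectors N m \<subseteq> {ls. set ls \<subseteq> {0..N} \<and> length ls = m}"
    unfolding incr_vectors_def using member_le_sum_list by fastforce
  show "finite {ls. set ls \<subseteq> {0..N} \<and> length ls = m}"
    by (rule finite_lists_length_eq) simp
qed

definition renewal_energy :: "(nat \<Rightarrow> real) \<Rightarrow> nat list \<Rightarrow> real" where
  "renewal_energy \<omega> ls = (\<Sum>i=1..length ls. \<omega> (sum_list (take i ls)))"

definition path_weight :: "(nat \<Rightarrow> real) \<Rightarrow> real \<Rightarrow> (nat \<Rightarrow> real) \<Rightarrow> nat list \<Rightarrow> real" where
  "path_weight K \<beta> \<omega> ls = prod_list (map K ls) * exp (\<beta> * renewal_energy \<omega> ls)"

lemma prod_list_map_conv_prod_nth: "prod_list (map f xs) = (\<Prod>i<length xs. f (xs ! i))"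
  by (induction xs) (simp_all add: prod.lessThan_Suc_shift del: prod.lessThan_Suc)

lemma Zc_eq_sum_path_weight:
  "Zc K \<beta> \<omega> N m = (\<Sum>ls\<in>incr_vectors N m. path_weight K \<beta> \<omega> ls)"
  unfolding Zc_def path_weight_def renewal_energy_def
  by (rule sum.cong) (auto simp: incr_vectors_def prod_list_map_conv_prod_nth)

lemma path_weight_nonneg:
  assumes "\<And>n. K n \<ge> 0"
  shows "path_weight K \<beta> \<omega> ls \<ge> 0"
  unfolding path_weight_def by (auto intro!: mult_nonneg_nonneg prod_list_nonneg simp: assms)

lemma Zc_nonneg:
  assumes "\<And>n. K n \<ge> 0"
  shows "Zc K \<beta> \<omega> N m \<ge> 0"
  unfolding Zc_eq_sum_path_weight by (intro sum_nonneg path_weight_nonneg assms)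

lemma renewal_energy_append:
  "renewal_energy \<omega> (a @ b) = renewal_energy \<omega> a + renewal_energy (shift (sum_list a) \<omega>) b"
proof -
  let ?e = "\<lambda>i. \<omega> (sum_list (take i (a @ b)))"
  have "renewal_energy \<omega> (a @ b) = (\<Sum>i=1..length a. ?e i) + (\<Sum>i=length a+1..length a+length b. ?e i)"
    unfolding renewal_energy_def length_append by (rule sum.ub_add_nat) simp
  also have "(\<Sum>i=1..length a. ?e i) = renewal_energy \<omega> a"
    unfolding renewal_energy_def by (rule sum.cong) auto
  also have "(\<Sum>i=length a+1..length a+length b. ?e i) = (\<Sum>i=1..length b. ?e (i + length a))"
    using sum.shift_bounds_cl_nat_ivl[of ?e 1 "length a" "length b"] by (simp add: add.commute)
  also have "\<dots> = renewal_energy (shift (sum_list a) \<omega>) b"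
    unfolding renewal_energy_def by (rule sum.cong) (auto simp: shift_def add.commute)
  finally show ?thesis .
qed

lemma path_weight_append:
  "path_weight K \<beta> \<omega> (a @ b) = path_weight K \<beta> \<omega> a * path_weight K \<beta> (shift (sum_list a) \<omega>) b"
  unfolding path_weight_def renewal_energy_append by (simp add: distrib_left exp_add)

lemma Zc_supermult:
  assumes "\<And>n. K n \<ge> 0"
  shows "Zc K \<beta> \<omega> N\<^sub>1 m\<^sub>1 * Zc K \<beta> (shift N\<^sub>1 \<omega>) N\<^sub>2 m\<^sub>2 \<le> Zc K \<beta> \<omega> (N\<^sub>1 + N\<^sub>2) (m\<^sub>1 + m\<^sub>2)"
proof -
  let ?A = "incr_vectors N\<^sub>1 m\<^sub>1" and ?B = "incr_vectors N\<^sub>2 m\<^sub>2"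
  let ?w = "path_weight K \<beta> \<omega>" and ?app = "\<lambda>(a, b). a @ b :: nat list"
  have "Zc K \<beta> \<omega> N\<^sub>1 m\<^sub>1 * Zc K \<beta> (shift N\<^sub>1 \<omega>) N\<^sub>2 m\<^sub>2
        = (\<Sum>(a, b)\<in>?A \<times> ?B. ?w a * path_weight K \<beta> (shift N\<^sub>1 \<omega>) b)"
    unfolding Zc_eq_sum_path_weight sum_product sum.cartesian_product ..
  also have "\<dots> = (\<Sum>(a, b)\<in>?A \<times> ?B. ?w (a @ b))"
    by (rule sum.cong) (auto simp: path_weight_append incr_vectors_def)
  also have "\<dots> = (\<Sum>c\<in>?app ` (?A \<times> ?B). ?w c)"
    by (subst sum.reindex) (auto simp: inj_on_def incr_vectors_def intro!: sum.cong)
  also have "\<dots> \<le> (\<Sum>c\<in>incr_vectors (N\<^sub>1 + N\<^sub>2) (m\<^sub>1 + m\<^sub>2). ?w c)"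
    by (rule sum_mono2[OF finite_incr_vectors])
      (auto simp: incr_vectors_def path_weight_nonneg assms)
  finally show ?thesis unfolding Zc_eq_sum_path_weight .
qed

lemma nat_split_between_bounds:
  fixes a\<^sub>1 b\<^sub>1 a\<^sub>2 b\<^sub>2 m :: nat
  assumes "a\<^sub>1 \<le> b\<^sub>1" "b\<^sub>1 \<le> a\<^sub>1 + 1" "a\<^sub>2 \<le> b\<^sub>2" "b\<^sub>2 \<le> a\<^sub>2 + 1"
    and "a\<^sub>1 + a\<^sub>2 \<le> m" "m \<le> b\<^sub>1 + b\<^sub>2"
  shows "\<exists>m\<^sub>1\<in>{a\<^sub>1, b\<^sub>1}. \<exists>m\<^sub>2\<in>{a\<^sub>2, b\<^sub>2}. m = m\<^sub>1 + m\<^sub>2"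
  using assms by simp presburger

lemma rounding_of_sum_split:
  fixes x y :: real
  assumes "x \<ge> 0" "y \<ge> 0" and "m \<in> {nat \<lfloor>x + y\<rfloor>, nat \<lceil>x + y\<rceil>}"
  shows "\<exists>m\<^sub>1\<in>{nat \<lfloor>x\<rfloor>, nat \<lceil>x\<rceil>}. \<exists>m\<^sub>2\<in>{nat \<lfloor>y\<rfloor>, nat \<lceil>y\<rceil>}. m = m\<^sub>1 + m\<^sub>2"
proof (rule nat_split_between_bounds)
  have "\<lceil>x\<rceil> \<le> \<lfloor>x\<rfloor> + 1" "\<lceil>y\<rceil> \<le> \<lfloor>y\<rfloor> + 1"
    using ceiling_diff_floor_le_1[of x] ceiling_diff_floor_le_1[of y] by linarith+
  moreover have "\<lfloor>x\<rfloor> \<le> \<lceil>x\<rceil>" "\<lfloor>y\<rfloor> \<le> \<lceil>y\<rceil>" "\<lfloor>x + y\<rfloor> \<le> \<lceil>x + y\<rceil>"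
    by (rule floor_le_ceiling)+
  moreover have "\<lfloor>x\<rfloor> + \<lfloor>y\<rfloor> \<le> \<lfloor>x + y\<rfloor>" "\<lceil>x + y\<rceil> \<le> \<lceil>x\<rceil> + \<lceil>y\<rceil>"
    by (rule le_floor_add ceiling_add_le)+
  moreover have "0 \<le> \<lfloor>x\<rfloor>" "0 \<le> \<lfloor>y\<rfloor>" "m = nat \<lfloor>x + y\<rfloor> \<or> m = nat \<lceil>x + y\<rceil>"
    using assms by auto
  ultimately show "nat \<lfloor>x\<rfloor> \<le> nat \<lceil>x\<rceil>" "nat \<lceil>x\<rceil> \<le> nat \<lfloor>x\<rfloor> + 1"
    and "nat \<lfloor>y\<rfloor> \<le> nat \<lceil>y\<rceil>" "nat \<lceil>y\<rceil> \<le> nat \<lfloor>y\<rfloor> + 1"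
    and "nat \<lfloor>x\<rfloor> + nat \<lfloor>y\<rfloor> \<le> m" "m \<le> nat \<lceil>x\<rceil> + nat \<lceil>y\<rceil>"
    by linarith+
qed

lemma Ztilde_nonneg:
  assumes "\<And>n. K n \<ge> 0"
  shows "Ztilde K \<beta> \<omega> \<rho> N \<ge> 0"
  unfolding Ztilde_def by (simp add: Zc_nonneg assms)

lemma Ztilde_supermult:
  assumes K: "\<And>n. K n \<ge> 0" and "\<rho> \<ge> 0"
  shows "Ztilde K \<beta> \<omega> \<rho> N\<^sub>1 * Ztilde K \<beta> (shift N\<^sub>1 \<omega>) \<rho> N\<^sub>2 \<le> Ztilde K \<beta> \<omega> \<rho> (N\<^sub>1 + N\<^sub>2)"
proof -
  let ?x = "\<rho> * real N\<^sub>1" and ?y = "\<rho> * real N\<^sub>2"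
  have "Ztilde K \<beta> \<omega> \<rho> N\<^sub>1 * Ztilde K \<beta> (shift N\<^sub>1 \<omega>) \<rho> N\<^sub>2 \<le> Zc K \<beta> \<omega> (N\<^sub>1 + N\<^sub>2) m"
    if m: "m \<in> {nat \<lfloor>?x + ?y\<rfloor>, nat \<lceil>?x + ?y\<rceil>}" for m
  proof -
    obtain m\<^sub>1 m\<^sub>2 where m\<^sub>1: "m\<^sub>1 \<in> {nat \<lfloor>?x\<rfloor>, nat \<lceil>?x\<rceil>}"
      and m\<^sub>2: "m\<^sub>2 \<in> {nat \<lfloor>?y\<rfloor>, nat \<lceil>?y\<rceil>}" and "m = m\<^sub>1 + m\<^sub>2"
      using rounding_of_sum_split[OF _ _ m] \<open>\<rho> \<ge> 0\<close> by auto
    have "Ztilde K \<beta> \<omega> \<rho> N\<^sub>1 * Ztilde K \<beta> (shift N\<^sub>1 \<omega>) \<rho> N\<^sub>2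
          \<le> Zc K \<beta> \<omega> N\<^sub>1 m\<^sub>1 * Zc K \<beta> (shift N\<^sub>1 \<omega>) N\<^sub>2 m\<^sub>2"
      using m\<^sub>1 m\<^sub>2 unfolding Ztilde_def
      by (intro mult_mono) (auto simp: Zc_nonneg K)
    also have "\<dots> \<le> Zc K \<beta> \<omega> (N\<^sub>1 + N\<^sub>2) m"
      unfolding \<open>m = m\<^sub>1 + m\<^sub>2\<close> by (rule Zc_supermult[OF K])
    finally show ?thesis .
  qed
  then show ?thesis
    unfolding Ztilde_def[of _ _ _ _ "N\<^sub>1 + N\<^sub>2"] by (simp add: distrib_left)
qed

lemma elog_mult_le:
  assumes "0 \<le> a" "0 \<le> b" "a * b \<le> c"
  shows "elog a + elog b \<le> elog c"
proof (cases "a = 0 \<or> b = 0")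
  case False
  with assms have "0 < a" "0 < b" by auto
  with assms(3) have "0 < c" by (smt (verit) mult_pos_pos)
  have "ln a + ln b = ln (a * b)"
    using \<open>0 < a\<close> \<open>0 < b\<close> by (simp add: ln_mult)
  also have "\<dots> \<le> ln c"
    using assms(3) \<open>0 < a\<close> \<open>0 < b\<close> by (simp add: ln_mono)
  finally have "ln a + ln b \<le> ln c" .
  with \<open>0 < a\<close> \<open>0 < b\<close> \<open>0 < c\<close> show ?thesis
    by (simp add: elog_def)
qed (auto simp: elog_def)

theorem lemma6p1:
  fixes K :: "nat \<Rightarrow> real" and \<alpha> C\<^sub>K \<beta> \<rho> :: real
    and \<omega> :: "nat \<Rightarrow> real" and N\<^sub>1 N\<^sub>2 :: nat
  assumes "renewal_kernel K \<alpha> C\<^sub>K"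
    and "\<beta> \<ge> 0" and "0 < \<rho>" and "\<rho> \<le> 1"
    and "N\<^sub>1 \<ge> 1" and "N\<^sub>2 \<ge> 1"
  shows "elog (Ztilde K \<beta> \<omega> \<rho> (N\<^sub>1 + N\<^sub>2))
           \<ge> elog (Ztilde K \<beta> \<omega> \<rho> N\<^sub>1) + elog (Ztilde K \<beta> (shift N\<^sub>1 \<omega>) \<rho> N\<^sub>2)"
proof -
  have K: "K n \<ge> 0" for n
    using assms(1) unfolding renewal_kernel_def by (cases "n = 0") (auto intro: less_imp_le)
  show ?thesis
    using \<open>0 < \<rho>\<close> by (intro elog_mult_le Ztilde_nonneg Ztilde_supermult K) simp_all
qed

end
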